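(* Let $\Sigma=\{0,1\}$. Define $\delta:\Sigma^*\times\Sigma^*\to\mathbb{Z}_{\ge0}$ by $\delta(u,v)=d_2(u,v)$ for $u,v\ne\varepsilon$, and $\delta(u,\varepsilon)=\delta(\varepsilon,u)$ given by $\delta(\varepsilon,\varepsilon)=0$, $\delta(000,\varepsilon)=1$, and $\delta(u,\varepsilon)=d_2(u,000)$ for $u\notin\{\varepsilon,000\}$. Then $\delta$ is an integer-valued Hamming compatible metric on $\Sigma^*$ which is not weakly uniform, and $\delta(000,\varepsilon)=1<2=d_2(000,\varepsilon)$.
   Context: $\Sigma^*$ is the set of all finite words over $\Sigma$, $l(u)$ the length of $u$, $\varepsilon$ the empty word, $H$ the Hamming distance between equal-length words. For arbitrary $x,y$, if $l(x)\ge l(y)$, $\underline{x}$ is the prefix of $x$ of length $l(y)$ and $\underline{y}=y$ (symmetrically otherwise). $d_2(x,y)=H(\underline{x},\underline{y})+\lceil |l(x)-l(y)|/2\rceil$ (a metric on $\Sigma^*$). A metric $\delta$ is Hamming compatible if $\delta(x,y)=H(x,y)$ whenever $l(x)=l(y)$. Two words of the same length $n$ are Hamming opposites if their Hamming distance is $n$; $\delta$ is weakly uniform if $\delta(x,\varepsilon)=\delta(y,\varepsilon)$ for all Hamming opposites $x,y$. *)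

theory Defs
  imports Main
begin

text \<open>Words over an alphabet are lists; for \<open>\<Sigma> = {0,1}\<close> we use \<open>bool list\<close>,
  with 0 = False and 1 = True.\<close>

definition hamming :: "'a list \<Rightarrow> 'a list \<Rightarrow> nat" where
  "hamming x y = card {i. i < length x \<and> x ! i \<noteq> y ! i}"

definition d2 :: "'a list \<Rightarrow> 'a list \<Rightarrow> nat" where
  "d2 x y = (let m = min (length x) (length y);
                 k = max (length x) (length y) - m
             in hamming (take m x) (take m y) + (k + 1) div 2)"

definition is_metric :: "('a list \<Rightarrow> 'a list \<Rightarrow> nat) \<Rightarrow> bool" where
  "is_metric \<delta> \<longleftrightarrow>
     (\<forall>x y. \<delta> x y = 0 \<longleftrightarrow> x = y) \<and>
     (\<forall>x y. \<delta> x y = \<delta> y x) \<and>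
     (\<forall>x y z. \<delta> x z \<le> \<delta> x y + \<delta> y z)"

definition hamming_compatible :: "('a list \<Rightarrow> 'a list \<Rightarrow> nat) \<Rightarrow> bool" where
  "hamming_compatible \<delta> \<longleftrightarrow>
     (\<forall>x y. length x = length y \<longrightarrow> \<delta> x y = hamming x y)"

definition hamming_opposites :: "'a list \<Rightarrow> 'a list \<Rightarrow> bool" where
  "hamming_opposites x y \<longleftrightarrow> length x = length y \<and> hamming x y = length x"

definition weakly_uniform :: "('a list \<Rightarrow> 'a list \<Rightarrow> nat) \<Rightarrow> bool" where
  "weakly_uniform \<delta> \<longleftrightarrow>
     (\<forall>x y. hamming_opposites x y \<longrightarrow> \<delta> x [] = \<delta> y [])"

definition delta_ex :: "bool list \<Rightarrow> bool list \<Rightarrow> nat" where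
  "delta_ex u v =
     (if u = [] \<and> v = [] then 0
      else if v = [] then (if u = [False, False, False] then 1 else d2 u [False, False, False])
      else if u = [] then (if v = [False, False, False] then 1 else d2 v [False, False, False])
      else d2 u v)"

end

theory Submission
  imports Defs
begin

(* The proof separates the two ingredients of the counterexample.
   (1) d2 is a metric.  Writing it as "mismatches among the first min(l x, l y)
       positions" plus the length gap ceil(|l x - l y|/2), the triangle inequality
       follows from the triangle inequality for mismatch counts on a common prefix
       and an arithmetic inequality for the length gaps, which pays for the
       positions lost when passing to the shortest of the three words.
   (2) A general re-anchoring construction: given any metric d on words and a
       nonempty word c, keep d between nonempty words and set the distance of u
       to the empty word to be d(u,c), except 1 for u = c.  This is again a
       metric, and it is Hamming compatible whenever d is, since the only word of
       the length of the empty word is the empty word itself.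
   The delta of the theorem is the re-anchoring of d2 at 000; it is not weakly
   uniform because the Hamming opposites 000 and 111 lie at distances 1 and 3
   from the empty word. *)

definition mismatches :: "nat \<Rightarrow> 'a list \<Rightarrow> 'a list \<Rightarrow> nat" where
  "mismatches m x y = card {i. i < m \<and> x ! i \<noteq> y ! i}"

lemma mismatches_sym: "mismatches m x y = mismatches m y x"
  unfolding mismatches_def by metis

lemma mismatches_triangle: "mismatches m x z \<le> mismatches m x y + mismatches m y z"
proof -
  have "{i. i < m \<and> x ! i \<noteq> z ! i}
          \<subseteq> {i. i < m \<and> x ! i \<noteq> y ! i} \<union> {i. i < m \<and> y ! i \<noteq> z ! i}"
    by auto
  then have "mismatches m x z
               \<le> card ({i. i < m \<and> x ! i \<noteq> y ! i} \<union> {i. i < m \<and> y ! i \<noteq> z ! i})"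
    unfolding mismatches_def by (intro card_mono) auto
  also have "\<dots> \<le> mismatches m x y + mismatches m y z"
    unfolding mismatches_def by (rule card_Un_le)
  finally show ?thesis .
qed

lemma mismatches_mono: "m \<le> m' \<Longrightarrow> mismatches m x y \<le> mismatches m' x y"
  unfolding mismatches_def by (intro card_mono) auto

lemma mismatches_extend:
  assumes "m \<le> m'"
  shows "mismatches m' x y \<le> mismatches m x y + (m' - m)"
proof -
  have "{i. i < m' \<and> x ! i \<noteq> y ! i} \<subseteq> {i. i < m \<and> x ! i \<noteq> y ! i} \<union> {m..<m'}"
    by auto
  then have "mismatches m' x y \<le> card ({i. i < m \<and> x ! i \<noteq> y ! i} \<union> {m..<m'})"
    unfolding mismatches_def by (intro card_mono) auto
  also have "\<dots> \<le> mismatches m x y + card {m..<m'}"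
    unfolding mismatches_def by (rule card_Un_le)
  finally show ?thesis by simp
qed

lemma mismatches_of_negation: "mismatches (length x) x (map Not x) = length x"
proof -
  have "{i. i < length x \<and> x ! i \<noteq> map Not x ! i} = {..<length x}"
    by auto
  then show ?thesis
    unfolding mismatches_def by simp
qed

definition length_gap :: "nat \<Rightarrow> nat \<Rightarrow> nat" where
  "length_gap a b = (max a b - min a b + 1) div 2"

lemma d2_via_mismatches:
  "d2 x y = mismatches (min (length x) (length y)) x y + length_gap (length x) (length y)"
proof -
  let ?m = "min (length x) (length y)"
  have "{i. i < length (take ?m x) \<and> take ?m x ! i \<noteq> take ?m y ! i}
          = {i. i < ?m \<and> x ! i \<noteq> y ! i}"
    by auto
  then show ?thesis
    unfolding d2_def Let_def hamming_def mismatches_def length_gap_def by simp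
qed

lemma hamming_eq_mismatches: "hamming x y = mismatches (length x) x y"
  unfolding hamming_def mismatches_def ..

text \<open>The length gaps pay for the positions of the common prefix of \<open>x\<close> and \<open>z\<close>
  that are not shared with the intermediate word.\<close>
lemma length_gap_triangle:
  fixes a b c :: nat
  shows "min a c - min (min a b) c + length_gap a c \<le> length_gap a b + length_gap b c"
proof -
  have gap_subadditive: "(p + q + 1) div 2 \<le> (p + 1) div 2 + (q + 1) div 2" for p q :: nat
    by presburger
  have gap_absorbs: "p + (q + 1) div 2 \<le> (p + 1) div 2 + (p + q + 1) div 2" for p q :: nat
    by presburger
  show ?thesis
  txt \<open>Either the intermediate length \<open>b\<close> loses nothing and the gap is subadditive,
    or \<open>b\<close> is the shortest length and its gaps absorb the lost positions.\<close>
  proof (cases "min a c \<le> b")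
    case True
    then have "max a c - min a c \<le> (max a b - min a b) + (max b c - min b c)"
      by simp
    then have "length_gap a c \<le> length_gap a b + length_gap b c"
      using gap_subadditive[of "max a b - min a b" "max b c - min b c"]
      unfolding length_gap_def by (meson div_le_mono add_le_mono1 order_trans)
    with True show ?thesis by simp
  next
    case False
    then show ?thesis
      using gap_absorbs[of "a - b" "c - a"] gap_absorbs[of "c - b" "a - c"]
      unfolding length_gap_def by (cases "a \<le> c") (simp_all add: min_def max_def)
  qed
qed

text \<open>Compare all three words on the prefix of length \<open>k\<close>, the shortest of the three
  lengths; the extra positions of the \<open>x\<close>-\<open>z\<close> prefix are paid for by the length gaps.\<close>
lemma d2_triangle: "d2 x z \<le> d2 x y + d2 y z"
proof -
  define k where "k = min (min (length x) (length y)) (length z)"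
  let ?mxz = "min (length x) (length z)"
  have "mismatches ?mxz x z \<le> mismatches k x z + (?mxz - k)"
    by (rule mismatches_extend) (simp add: k_def)
  also have "\<dots> \<le> mismatches k x y + mismatches k y z + (?mxz - k)"
    using mismatches_triangle[of k x z y] by simp
  also have "\<dots> \<le> mismatches (min (length x) (length y)) x y
                  + mismatches (min (length y) (length z)) y z + (?mxz - k)"
  proof -
    have "mismatches k x y \<le> mismatches (min (length x) (length y)) x y"
      by (rule mismatches_mono) (auto simp: k_def min_def)
    moreover have "mismatches k y z \<le> mismatches (min (length y) (length z)) y z"
      by (rule mismatches_mono) (auto simp: k_def min_def)
    ultimately show ?thesis by linarith
  qed
  finally show ?thesis
    using length_gap_triangle[of "length x" "length z" "length y"]
    unfolding d2_via_mismatches k_def by linarith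
qed

lemma d2_sym: "d2 x y = d2 y x"
  unfolding d2_via_mismatches length_gap_def
  by (simp add: mismatches_sym min.commute max.commute)

lemma length_gap_eq_0_iff: "length_gap a b = 0 \<longleftrightarrow> a = b"
proof -
  have "(n + 1) div 2 = 0 \<longleftrightarrow> n = 0" for n :: nat
    by presburger
  moreover have "max a b - min a b = 0 \<longleftrightarrow> a = b"
    by linarith
  ultimately show ?thesis
    unfolding length_gap_def by presburger
qed

lemma d2_eq_0_iff: "d2 x y = 0 \<longleftrightarrow> x = y"
proof
  assume zero: "d2 x y = 0"
  then have "length_gap (length x) (length y) = 0"
    unfolding d2_via_mismatches by simp
  then have same_length: "length x = length y"
    by (simp add: length_gap_eq_0_iff)
  with zero have "mismatches (length x) x y = 0"
    unfolding d2_via_mismatches by simp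
  then have "\<forall>i < length x. x ! i = y ! i"
    unfolding mismatches_def by simp
  with same_length show "x = y"
    by (simp add: list_eq_iff_nth_eq)
next
  assume "x = y"
  then show "d2 x y = 0"
    unfolding d2_via_mismatches mismatches_def by (simp add: length_gap_eq_0_iff)
qed

lemma d2_metric: "is_metric d2"
  unfolding is_metric_def by (intro conjI allI d2_eq_0_iff d2_sym d2_triangle)

lemma d2_same_length: "length x = length y \<Longrightarrow> d2 x y = hamming x y"
  unfolding d2_def Let_def by simp

lemma d2_hamming_compatible: "hamming_compatible d2"
  unfolding hamming_compatible_def by (blast intro: d2_same_length)

definition anchor_dist :: "('a list \<Rightarrow> 'a list \<Rightarrow> nat) \<Rightarrow> 'a list \<Rightarrow> 'a list \<Rightarrow> nat" where
  "anchor_dist d c u = (if u = c then 1 else d u c)"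

definition reanchor :: "('a list \<Rightarrow> 'a list \<Rightarrow> nat) \<Rightarrow> 'a list \<Rightarrow> 'a list \<Rightarrow> 'a list \<Rightarrow> nat"
  where
  "reanchor d c u v =
     (if u = [] \<and> v = [] then 0
      else if v = [] then anchor_dist d c u
      else if u = [] then anchor_dist d c v
      else d u v)"

lemma delta_ex_is_reanchor: "delta_ex = reanchor d2 [False, False, False]"
  unfolding delta_ex_def reanchor_def anchor_dist_def by (intro ext) simp

context
  fixes d :: "'a list \<Rightarrow> 'a list \<Rightarrow> nat" and c :: "'a list"
  assumes metric: "is_metric d"
begin

lemma dist_eq_0_iff: "d x y = 0 \<longleftrightarrow> x = y"
  using metric unfolding is_metric_def by simp

lemma dist_sym: "d x y = d y x"
  using metric unfolding is_metric_def by simp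

lemma dist_triangle: "d x z \<le> d x y + d y z"
  using metric unfolding is_metric_def by (elim conjE allE)

lemma dist_self: "d x x = 0"
  by (simp add: dist_eq_0_iff)

lemma anchor_dist_pos: "anchor_dist d c u \<noteq> 0"
  by (metis anchor_dist_def dist_eq_0_iff zero_neq_one)

lemma dist_le_anchor_dist: "d u c \<le> anchor_dist d c u"
  unfolding anchor_dist_def by (simp add: dist_self)

lemma anchor_dist_triangle: "anchor_dist d c z \<le> anchor_dist d c y + d y z"
proof (cases "z = c")
  case True
  then show ?thesis
    using anchor_dist_pos[of y] by (simp add: anchor_dist_def)
next
  case False
  then have "anchor_dist d c z = d z c" by (simp add: anchor_dist_def)
  also have "\<dots> \<le> d z y + d y c" by (rule dist_triangle)
  also have "\<dots> \<le> anchor_dist d c y + d y z"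
    using dist_le_anchor_dist[of y] dist_sym[of z y] by simp
  finally show ?thesis .
qed

lemma dist_le_anchor_dist_sum: "d x z \<le> anchor_dist d c x + anchor_dist d c z"
  using dist_triangle[of x z c] dist_le_anchor_dist[of x] dist_le_anchor_dist[of z]
    dist_sym[of c z] by linarith

lemma reanchor_metric: "is_metric (reanchor d c)"
  unfolding is_metric_def
proof (intro conjI allI)
  fix x y
  show "reanchor d c x y = 0 \<longleftrightarrow> x = y"
    unfolding reanchor_def using anchor_dist_pos dist_eq_0_iff by auto
  show "reanchor d c x y = reanchor d c y x"
    unfolding reanchor_def using dist_sym by auto
next
  fix x y z
  show "reanchor d c x z \<le> reanchor d c x y + reanchor d c y z"
  proof (cases "x = []"; cases "y = []"; cases "z = []")
    assume "x \<noteq> []" "y = []" "z \<noteq> []"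
    then show ?thesis
      unfolding reanchor_def using dist_le_anchor_dist_sum[of x z] by simp
  next
    assume "x = []" "y \<noteq> []" "z \<noteq> []"
    then show ?thesis
      unfolding reanchor_def using anchor_dist_triangle[where y = y and z = z] by simp
  next
    assume "x \<noteq> []" "y \<noteq> []" "z = []"
    then show ?thesis
      unfolding reanchor_def using anchor_dist_triangle[where y = y and z = x] dist_sym[of x y] by simp
  next
    assume "x \<noteq> []" "y \<noteq> []" "z \<noteq> []"
    then show ?thesis
      unfolding reanchor_def using dist_triangle[of x z y] by simp
  qed (simp_all add: reanchor_def)
qed

end

text \<open>Equal-length words are either both empty or both nonempty, so
  re-anchoring never changes distances between words of equal length.\<close>
lemma reanchor_hamming_compatible:
  "hamming_compatible d \<Longrightarrow> hamming_compatible (reanchor d c)"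
  unfolding hamming_compatible_def reanchor_def hamming_def by auto

lemma hamming_opposites_negation: "hamming_opposites x (map Not x)"
  unfolding hamming_opposites_def hamming_eq_mismatches
  using mismatches_of_negation by simp

theorem mainTheorem11:
  shows "is_metric delta_ex \<and> hamming_compatible delta_ex \<and> \<not> weakly_uniform delta_ex
         \<and> delta_ex [False, False, False] [] = 1 \<and> d2 [False, False, False] ([] :: bool list) = 2"
proof (intro conjI)
  show "is_metric delta_ex"
    unfolding delta_ex_is_reanchor using d2_metric by (rule reanchor_metric)
  show "hamming_compatible delta_ex"
    unfolding delta_ex_is_reanchor using d2_hamming_compatible by (rule reanchor_hamming_compatible)
  show "delta_ex [False, False, False] [] = 1"
    by (simp add: delta_ex_def)
  show "d2 [False, False, False] ([] :: bool list) = 2"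
    by (simp add: d2_def hamming_def)
  show "\<not> weakly_uniform delta_ex"
  proof
    assume "weakly_uniform delta_ex"
    then have "delta_ex [False, False, False] [] = delta_ex [True, True, True] []"
      using hamming_opposites_negation[of "[False, False, False]"]
      unfolding weakly_uniform_def by simp
    moreover have "hamming [True, True, True] [False, False, False] = 3"
      using hamming_opposites_negation[of "[True, True, True]"]
      by (simp add: hamming_opposites_def)
    then have "delta_ex [True, True, True] [] = 3"
      by (simp add: delta_ex_def d2_same_length)
    ultimately show False
      by (simp add: delta_ex_def)
  qed
qed

end
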